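(* Let $0<\underline{s}<\overline{s}<1$, $p\in(0,1)$, $u,v>0$ with $u\ne v$, with $\mathcal{E}_0\ne\emptyset$, and fix $\varepsilon_0>0$ and $n\in\mathbb{N}$. If $f\in F^\infty_{(\underline{s},\overline{s})}$ is real-analytic on $(\underline{s},\overline{s})$, then $f\notin\overline{F}_n$, where $\overline{F}_n$ is the closure in $F^\infty_{(\underline{s},\overline{s})}$ (for the $L_\infty$-norm) of the set $F_n$ of signals $g$ whose set $S_g=\{c\in C_{\varepsilon_0}: G_g(\lambda,0)=G_g(\lambda,c)=0\text{ for some }\lambda\in\mathcal{E}_0\cap\mathcal{E}_c\}$ has Lebesgue measure at least $\frac1n$.
   Context: $F^\infty_{(\underline{s},\overline{s})}=\{f\in L_\infty(\underline{s},\overline{s})\cap C^0(\underline{s},\overline{s}): \int_{\underline{s}}^{\overline{s}} f(s)\frac{1-2s}{s}ds=0,\ \int_{\underline{s}}^{\overline{s}} f=1,\ f\ge0,\ f(s)\frac{1-s}{s}\in L_\infty(\underline{s},\overline{s})\}$. For $\lambda>0$, $c\in(-1,u)\cap(-v,1)$: $m(\lambda,c)=\frac{\lambda(1+c)}{\lambda(1+c)+(u-c)}$, $mm(\lambda,c)=\frac{\lambda(1-c)}{\lambda(1-c)+(v+c)}$; $\mathcal{E}_c=\{\lambda>0: m(\lambda,c),mm(\lambda,c)\in(\underline{s},\overline{s})\}$. $C=\{c\in(-1,u)\cap(-v,1):\mathcal{E}_c\ne\emptyset\}\setminus\{0\}$, $C_{\varepsilon_0}=C\cap(-1+\varepsilon_0,u-\varepsilon_0)\cap(-v+\varepsilon_0,1-\varepsilon_0)$.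 $G_f(\lambda,c)=p\int_{\underline{s}}^{m(\lambda,c)} f(s)\frac{1-2s}{s}ds+(1-p)\int_{mm(\lambda,c)}^{\overline{s}} f(s)\frac{1-2s}{s}ds$. *)

theory Defs
  imports "HOL-Analysis.Analysis"
begin

definition wt :: "real \<Rightarrow> real" where
  "wt s = (1 - 2 * s) / s"

text \<open>Functions are real functions
  whose values outside (sl, sh) are irrelevant; L-infinity membership of a continuous
  function on the open interval is boundedness there.\<close>
definition Finf :: "real \<Rightarrow> real \<Rightarrow> (real \<Rightarrow> real) set" where
  "Finf sl sh = {f.
     (\<exists>B. \<forall>s\<in>{sl<..<sh}. \<bar>f s\<bar> \<le> B) \<and>
     continuous_on {sl<..<sh} f \<and>
     f integrable_on {sl..sh} \<and>
     (\<lambda>s. f s * wt s) integrable_on {sl..sh} \<and>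
     integral {sl..sh} (\<lambda>s. f s * wt s) = 0 \<and>
     integral {sl..sh} f = 1 \<and>
     (\<forall>s\<in>{sl<..<sh}. f s \<ge> 0) \<and>
     (\<exists>B. \<forall>s\<in>{sl<..<sh}. \<bar>f s * (1 - s) / s\<bar> \<le> B)}"

definition mfun :: "real \<Rightarrow> real \<Rightarrow> real \<Rightarrow> real" where
  "mfun u lam c = lam * (1 + c) / (lam * (1 + c) + (u - c))"

definition mmfun :: "real \<Rightarrow> real \<Rightarrow> real \<Rightarrow> real" where
  "mmfun v lam c = lam * (1 - c) / (lam * (1 - c) + (v + c))"

definition Eset :: "real \<Rightarrow> real \<Rightarrow> real \<Rightarrow> real \<Rightarrow> real \<Rightarrow> real set" where
  "Eset sl sh u v c = {lam. lam > 0 \<and> mfun u lam c \<in> {sl<..<sh} \<and> mmfun v lam c \<in> {sl<..<sh}}"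

definition Cset :: "real \<Rightarrow> real \<Rightarrow> real \<Rightarrow> real \<Rightarrow> real set" where
  "Cset sl sh u v = {c. -1 < c \<and> c < u \<and> -v < c \<and> c < 1 \<and> Eset sl sh u v c \<noteq> {}} - {0}"

definition Ceps :: "real \<Rightarrow> real \<Rightarrow> real \<Rightarrow> real \<Rightarrow> real \<Rightarrow> real set" where
  "Ceps sl sh u v eps0 = Cset sl sh u v \<inter> {-1 + eps0<..<u - eps0} \<inter> {-v + eps0<..<1 - eps0}"

definition Gf :: "real \<Rightarrow> real \<Rightarrow> real \<Rightarrow> real \<Rightarrow> real \<Rightarrow> (real \<Rightarrow> real) \<Rightarrow> real \<Rightarrow> real \<Rightarrow> real" where
  "Gf sl sh p u v f lam c =
     p * integral {sl..mfun u lam c} (\<lambda>s. f s * wt s)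
     + (1 - p) * integral {mmfun v lam c..sh} (\<lambda>s. f s * wt s)"

definition Sset :: "real \<Rightarrow> real \<Rightarrow> real \<Rightarrow> real \<Rightarrow> real \<Rightarrow> real \<Rightarrow> (real \<Rightarrow> real) \<Rightarrow> real set" where
  "Sset sl sh p u v eps0 g = {c \<in> Ceps sl sh u v eps0.
     \<exists>lam \<in> Eset sl sh u v 0 \<inter> Eset sl sh u v c. Gf sl sh p u v g lam 0 = 0 \<and> Gf sl sh p u v g lam c = 0}"

definition Fn :: "real \<Rightarrow> real \<Rightarrow> real \<Rightarrow> real \<Rightarrow> real \<Rightarrow> real \<Rightarrow> nat \<Rightarrow> (real \<Rightarrow> real) set" where
  "Fn sl sh p u v eps0 n = {g \<in> Finf sl sh.
     Sset sl sh p u v eps0 g \<in> sets lebesgue \<and>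
     emeasure lebesgue (Sset sl sh p u v eps0 g) \<ge> ennreal (1 / real n)}"

definition Linf_closure :: "real \<Rightarrow> real \<Rightarrow> (real \<Rightarrow> real) set \<Rightarrow> (real \<Rightarrow> real) set" where
  "Linf_closure sl sh A = {f \<in> Finf sl sh. \<forall>e>0. \<exists>g\<in>A. \<forall>s\<in>{sl<..<sh}. \<bar>f s - g s\<bar> < e}"

definition real_analytic_on :: "(real \<Rightarrow> real) \<Rightarrow> real set \<Rightarrow> bool" where
  "real_analytic_on f S \<longleftrightarrow> (\<forall>x\<in>S. \<exists>r>0. \<exists>a::nat \<Rightarrow> real.
      \<forall>y. \<bar>y - x\<bar> < r \<longrightarrow> (\<lambda>k. a k * (y - x) ^ k) sums f y)"

end

(*
  H(x) = integral of f(s)(1-2s)/s over [sl, x] vanishes at sl and sh, increases strictly up to 1/2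
  and decreases strictly after it (f >= 0 is analytic and not identically zero), and it extends
  holomorphically, as does Phi(lam, c) = p H(m(lam, c)) - (1-p) H(mm(lam, c)) = G_f(lam, c) in each
  variable, since m and mm are Moebius maps in lam and in c.
  By the identity theorem Phi(., 0) has countably many zeros in E_0 (it is nonzero at both ends of
  E_0), and for each of them Phi(lam, .) has countably many zeros: at the crossing point m = mm it
  equals (2p-1) H(m) != 0, and for p = 1/2 the strict monotonicity of H on each side of 1/2 rules
  out H(m) = H(mm) near the crossing point. So only countably many c admit a common zero.
  If g is uniformly close to f, every c in S_g is a common near-zero of Phi; these compact sets of
  c shrink, as the tolerance goes to 0, into the countable set of common zeros, so their measure
  tends to 0 and cannot stay above 1/n.
*)

theory Submission
  imports Defs "HOL-Complex_Analysis.Complex_Analysis"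
begin

text \<open>Unlike power series, local holomorphic extensions inherit composition, primitives and the
  identity theorem directly from complex analysis.\<close>

definition real_holomorphic_on :: "(real \<Rightarrow> real) \<Rightarrow> real set \<Rightarrow> bool" where
  "real_holomorphic_on g S \<longleftrightarrow> (\<forall>x\<in>S. \<exists>G. G analytic_on {complex_of_real x} \<and>
     (\<forall>\<^sub>F y in nhds x. G (complex_of_real y) = complex_of_real (g y)))"

lemma filterlim_of_real_at: "filterlim complex_of_real (at (complex_of_real x)) (at x)"
  by (intro filterlim_atI tendsto_of_real tendsto_ident_at) (auto simp: eventually_at_filter)

lemma real_analytic_imp_real_holomorphic_on:
  assumes "real_analytic_on f S" shows "real_holomorphic_on f S"
  unfolding real_holomorphic_on_def
proof
  fix x assume "x \<in> S"
  then obtain r a where r: "r > 0" and a: "\<And>y. \<bar>y - x\<bar> < r \<Longrightarrow> (\<lambda>k. a k * (y - x) ^ k) sums f y"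
    using assms unfolding real_analytic_on_def by blast
  define F where "F = Abs_fps (\<lambda>k. complex_of_real (a k))"
  have rad: "fps_conv_radius F \<ge> ereal r"
    unfolding fps_conv_radius_def F_def fps_nth_Abs_fps
  proof (rule conv_radius_geI_ex')
    fix \<rho> :: real assume "0 < \<rho>" "ereal \<rho> < ereal r"
    then have "summable (\<lambda>k. a k * \<rho> ^ k)" using a[of "x + \<rho>"] by (simp add: sums_summable)
    then have "summable (\<lambda>k. complex_of_real (a k * \<rho> ^ k))"
      by (simp only: summable_complex_of_real)
    then show "summable (\<lambda>k. complex_of_real (a k) * complex_of_real \<rho> ^ k)"
      by simp
  qed
  define G where "G z = eval_fps F (z - complex_of_real x)" for z
  have "G holomorphic_on ball (complex_of_real x) r"
  proof -
    have "(\<lambda>z. z - complex_of_real x) ` ball (complex_of_real x) r \<subseteq> eball 0 (fps_conv_radius F)"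
      using rad by (auto simp: dist_norm norm_minus_commute) (metis less_ereal.simps(1)
        order.strict_trans2)
    then show ?thesis unfolding G_def
      by (intro holomorphic_on_compose_gen[unfolded o_def, OF _ holomorphic_on_eval_fps])
        (auto intro!: holomorphic_intros)
  qed
  then have "G analytic_on {complex_of_real x}"
    using r by (auto simp: analytic_on_def)
  moreover have "\<forall>\<^sub>F y in nhds x. G (complex_of_real y) = complex_of_real (f y)"
    unfolding eventually_nhds_metric
  proof (intro exI conjI allI impI)
    fix y assume "dist y x < r"
    then have "(\<lambda>k. complex_of_real (a k) * (complex_of_real y - complex_of_real x) ^ k)
        sums complex_of_real (f y)"
      using sums_of_real[OF a[of y]] by (simp add: dist_real_def)
    then show "G (complex_of_real y) = complex_of_real (f y)"
      unfolding G_def eval_fps_def F_def fps_nth_Abs_fps by (simp add: sums_iff)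
  qed (fact r)
  ultimately show "\<exists>G. G analytic_on {complex_of_real x} \<and>
      (\<forall>\<^sub>F y in nhds x. G (complex_of_real y) = complex_of_real (f y))" by blast
qed

lemma holomorphic_imp_real_holomorphic_on:
  assumes "\<Phi> holomorphic_on W" "open W" "complex_of_real ` S \<subseteq> W"
    and "\<And>y. \<Phi> (complex_of_real y) = complex_of_real (\<phi> y)"
  shows "real_holomorphic_on \<phi> S"
  unfolding real_holomorphic_on_def
proof (intro ballI exI conjI)
  show "\<Phi> analytic_on {complex_of_real x}" if "x \<in> S" for x
    using assms that analytic_on_open[of W \<Phi>] analytic_on_subset[of \<Phi> W] by auto
qed (simp add: assms(4))

lemma real_holomorphic_on_const: "real_holomorphic_on (\<lambda>_. a) S"
  by (rule holomorphic_imp_real_holomorphic_on[of "\<lambda>_. complex_of_real a" UNIV]) auto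

lemma real_holomorphic_on_moebius:
  assumes "\<And>x. x \<in> S \<Longrightarrow> c * x + d \<noteq> 0"
  shows "real_holomorphic_on (\<lambda>x. (a * x + b) / (c * x + d)) S"
proof (rule holomorphic_imp_real_holomorphic_on)
  let ?W = "{z. complex_of_real c * z + complex_of_real d \<noteq> 0}"
  show "(\<lambda>z. (complex_of_real a * z + complex_of_real b) / (complex_of_real c * z +
    complex_of_real d))
      holomorphic_on ?W"
    by (auto intro!: holomorphic_intros)
  show "open ?W"
    by (intro open_Collect_neq continuous_intros)
  show "complex_of_real ` S \<subseteq> ?W"
    using assms by (auto simp flip: of_real_mult of_real_add)
qed simp

lemma real_holomorphic_on_diff:
  assumes "real_holomorphic_on g S" "real_holomorphic_on h S"
  shows "real_holomorphic_on (\<lambda>x. g x - h x) S"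
  unfolding real_holomorphic_on_def
proof
  fix x assume "x \<in> S"
  then obtain G H where "G analytic_on {complex_of_real x}" "H analytic_on {complex_of_real x}"
    "\<forall>\<^sub>F y in nhds x. G (complex_of_real y) = complex_of_real (g y)"
    "\<forall>\<^sub>F y in nhds x. H (complex_of_real y) = complex_of_real (h y)"
    using assms unfolding real_holomorphic_on_def by blast
  then show "\<exists>F. F analytic_on {complex_of_real x} \<and>
      (\<forall>\<^sub>F y in nhds x. F (complex_of_real y) = complex_of_real (g y - h y))"
    by (intro exI[of _ "\<lambda>z. G z - H z"] conjI analytic_intros) (auto elim: eventually_elim2)
qed

lemma real_holomorphic_on_mult:
  assumes "real_holomorphic_on g S" "real_holomorphic_on h S"
  shows "real_holomorphic_on (\<lambda>x. g x * h x) S"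
  unfolding real_holomorphic_on_def
proof
  fix x assume "x \<in> S"
  then obtain G H where "G analytic_on {complex_of_real x}" "H analytic_on {complex_of_real x}"
    "\<forall>\<^sub>F y in nhds x. G (complex_of_real y) = complex_of_real (g y)"
    "\<forall>\<^sub>F y in nhds x. H (complex_of_real y) = complex_of_real (h y)"
    using assms unfolding real_holomorphic_on_def by blast
  then show "\<exists>F. F analytic_on {complex_of_real x} \<and>
      (\<forall>\<^sub>F y in nhds x. F (complex_of_real y) = complex_of_real (g y * h y))"
    by (intro exI[of _ "\<lambda>z. G z * H z"] conjI analytic_intros) (auto elim: eventually_elim2)
qed

lemma real_holomorphic_on_compose:
  assumes g: "real_holomorphic_on g T" and \<phi>: "real_holomorphic_on \<phi> S" and "\<phi> ` S \<subseteq> T"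
  shows "real_holomorphic_on (\<lambda>x. g (\<phi> x)) S"
  unfolding real_holomorphic_on_def
proof
  fix x assume "x \<in> S"
  then obtain F where F: "F analytic_on {complex_of_real x}"
    and F_eq: "\<forall>\<^sub>F y in nhds x. F (complex_of_real y) = complex_of_real (\<phi> y)"
    using \<phi> unfolding real_holomorphic_on_def by blast
  obtain G where G: "G analytic_on {complex_of_real (\<phi> x)}"
    and G_eq: "\<forall>\<^sub>F y in nhds (\<phi> x). G (complex_of_real y) = complex_of_real (g y)"
    using g \<open>x \<in> S\<close> assms(3) unfolding real_holomorphic_on_def by blast
  have Fx: "F (complex_of_real x) = complex_of_real (\<phi> x)"
    using eventually_nhds_x_imp_x[OF F_eq] .
  have "((\<lambda>y. F (complex_of_real y)) \<longlongrightarrow> F (complex_of_real x)) (nhds x)"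
    using analytic_at_imp_isCont[OF F] by (intro isCont_tendsto_compose[of _ F] tendsto_of_real)
      (auto simp: tendsto_nhds_iff)
  then have "((\<lambda>y. complex_of_real (\<phi> y)) \<longlongrightarrow> complex_of_real (\<phi> x)) (nhds x)"
    using F_eq Fx by (simp add: tendsto_cong)
  then have "(\<phi> \<longlongrightarrow> \<phi> x) (nhds x)"
    using tendsto_Re by fastforce
  then have "\<forall>\<^sub>F y in nhds x. G (complex_of_real (\<phi> y)) = complex_of_real (g (\<phi> y))"
    using G_eq by (rule eventually_compose_filterlim[rotated])
  then have "\<forall>\<^sub>F y in nhds x. (G \<circ> F) (complex_of_real y) = complex_of_real (g (\<phi> y))"
    using F_eq by eventually_elim simp
  moreover have "(G \<circ> F) analytic_on {complex_of_real x}"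
    using F G Fx by (intro analytic_on_compose) auto
  ultimately show "\<exists>H. H analytic_on {complex_of_real x} \<and>
      (\<forall>\<^sub>F y in nhds x. H (complex_of_real y) = complex_of_real (g (\<phi> y)))" by blast
qed

lemma real_holomorphic_on_frequently_zero_imp_eventually_zero:
  assumes "real_holomorphic_on g S" "x \<in> S" "\<exists>\<^sub>F t in at x. g t = 0"
  shows "\<forall>\<^sub>F t in nhds x. g t = 0"
proof -
  obtain G where G: "G analytic_on {complex_of_real x}"
    and G_eq: "\<forall>\<^sub>F y in nhds x. G (complex_of_real y) = complex_of_real (g y)"
    using assms(1,2) unfolding real_holomorphic_on_def by blast
  have G_eq_at: "\<forall>\<^sub>F y in at x. G (complex_of_real y) = complex_of_real (g y)"
    using G_eq by (simp add: eventually_nhds_conv_at)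
  have "\<exists>\<^sub>F w in at (complex_of_real x). G w = 0"
  proof (rule ccontr)
    assume "\<not> (\<exists>\<^sub>F w in at (complex_of_real x). G w = 0)"
    then have "\<forall>\<^sub>F w in at (complex_of_real x). G w \<noteq> 0"
      by (simp add: not_frequently)
    then have "\<forall>\<^sub>F y in at x. G (complex_of_real y) \<noteq> 0"
      using filterlim_of_real_at by (rule eventually_compose_filterlim)
    then have "\<forall>\<^sub>F y in at x. g y \<noteq> 0"
      using G_eq_at by eventually_elim simp
    then show False using assms(3) by (simp add: frequently_def)
  qed
  then have "\<forall>\<^sub>F w in at (complex_of_real x). G w = 0"
    using G by (intro not_essential_frequently_0_imp_eventually_0
        isolated_singularity_at_analytic not_essential_analytic)
  moreover have "G (complex_of_real x) = 0"
    using calculation analytic_at_imp_isCont[OF G]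
    by (metis tendsto_eventually continuous_within tendsto_unique trivial_limit_at)
  ultimately have "\<forall>\<^sub>F w in nhds (complex_of_real x). G w = 0"
    by (simp add: eventually_nhds_conv_at)
  then have "\<forall>\<^sub>F y in nhds x. G (complex_of_real y) = 0"
    by (rule eventually_compose_filterlim[OF _ tendsto_of_real[OF filterlim_ident]])
  then show ?thesis using G_eq by eventually_elim simp
qed

lemma real_holomorphic_on_eq_zero:
  assumes g: "real_holomorphic_on g S" and S: "open S" "connected S"
    and x: "x \<in> S" "\<exists>\<^sub>F t in at x. g t = 0" and "y \<in> S"
  shows "g y = 0"
proof -
  define T where "T = {z \<in> S. \<forall>\<^sub>F t in nhds z. g t = 0}"
  have T_limpts: "T = S \<inter> {z. z islimpt {t. g t = 0}}"
    unfolding T_def islimpt_conv_frequently_at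
    using real_holomorphic_on_frequently_zero_imp_eventually_zero[OF g]
    by (auto simp: eventually_nhds_conv_at dest: eventually_frequently[rotated])
  have "openin (top_of_set S) T"
  proof (rule openin_subopen[THEN iffD2], intro ballI)
    fix z assume "z \<in> T"
    then obtain U where U: "open U" "z \<in> U" "\<forall>t\<in>U. g t = 0"
      unfolding T_def eventually_nhds by blast
    then have "S \<inter> U \<subseteq> T"
      unfolding T_def eventually_nhds by blast
    then show "\<exists>V. openin (top_of_set S) V \<and> z \<in> V \<and> V \<subseteq> T"
      using U \<open>z \<in> T\<close> unfolding T_def by (intro exI[of _ "S \<inter> U"]) (auto simp: openin_open_Int)
  qed
  moreover have "closedin (top_of_set S) T"
    unfolding T_limpts by (simp add: closedin_closed_Int closed_limpts)
  moreover have "x \<in> T"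
    using T_limpts x by (simp add: islimpt_conv_frequently_at)
  ultimately have "T = S"
    using S(2) unfolding connected_clopen by blast
  then show ?thesis
    using \<open>y \<in> S\<close> unfolding T_def by (auto dest: eventually_nhds_x_imp_x)
qed

lemma real_holomorphic_on_countable_zeros:
  assumes g: "real_holomorphic_on g S" and S: "open S" "connected S"
    and x0: "x0 \<in> S" "g x0 \<noteq> 0"
  shows "countable {t \<in> S. g t = 0}"
proof -
  have "\<forall>\<^sub>F t in at y. t \<notin> {t. g t = 0}" if "y \<in> S" for y
  proof (rule ccontr)
    assume "\<not> (\<forall>\<^sub>F t in at y. t \<notin> {t. g t = 0})"
    then have "\<exists>\<^sub>F t in at y. g t = 0"
      by (simp add: not_eventually)
    then show False
      using real_holomorphic_on_eq_zero[OF g S that _ x0(1)] x0(2) by blast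
  qed
  then have "{t. g t = 0} sparse_in S"
    using sparse_in_eventually_iff[OF S(1)] by blast
  then have "countable (S \<inter> {t. g t = 0})"
    using sparse_imp_countable[OF S(1)] by blast
  then show ?thesis
    by (simp add: Int_def)
qed

lemma holomorphic_extension_of_real_primitive:
  assumes F: "F holomorphic_on ball (complex_of_real x) r"
    and Fg: "\<And>t. t \<in> ball x r \<Longrightarrow> F (complex_of_real t) = complex_of_real (g t)"
    and G': "\<And>t. t \<in> ball x r \<Longrightarrow> (G has_real_derivative g t) (at t)"
  obtains P where "P holomorphic_on ball (complex_of_real x) r"
    "\<And>t. t \<in> ball x r \<Longrightarrow> P (complex_of_real t) = complex_of_real (G t)"
proof -
  define B where "B = ball (complex_of_real x) r"
  obtain P0 where "\<And>z. z \<in> B \<Longrightarrow> (P0 has_field_derivative F z) (at z within B)"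
    using holomorphic_convex_primitive'[OF convex_ball open_ball F] unfolding B_def by blast
  then have P0: "(P0 has_field_derivative F z) (at z)" if "z \<in> B" for z
    using that at_within_open[OF that] by (metis B_def open_ball)
  have "\<exists>c. \<forall>t\<in>ball x r. P0 (complex_of_real t) - complex_of_real (G t) = c"
  proof (rule has_derivative_zero_constant[OF convex_ball])
    fix t assume t: "t \<in> ball x r"
    then have "complex_of_real t \<in> B"
      by (simp add: B_def dist_of_real)
    from has_vector_derivative_real_field[OF P0[OF this]]
    have "((\<lambda>t. P0 (complex_of_real t)) has_vector_derivative complex_of_real (g t)) (at t within
      ball x r)"
      by (simp only: Fg[OF t])
    moreover have "((\<lambda>t. complex_of_real (G t)) has_vector_derivative complex_of_real (g t)) (at t
      within ball x r)"
      by (rule has_vector_derivative_of_real[OF has_field_derivative_at_within[OF G'[OF t]]])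
    ultimately have "((\<lambda>t. P0 (complex_of_real t) - complex_of_real (G t)) has_vector_derivative
        complex_of_real (g t) - complex_of_real (g t)) (at t within ball x r)"
      by (rule has_vector_derivative_diff)
    then
    show "((\<lambda>t. P0 (complex_of_real t) - complex_of_real (G t)) has_derivative (\<lambda>h. 0)) (at t
      within ball x r)"
      by (simp add: has_vector_derivative_def)
  qed
  then obtain c where c: "\<And>t. t \<in> ball x r \<Longrightarrow> P0 (complex_of_real t) - c = complex_of_real (G t)"
    by (auto simp: algebra_simps)
  have "(\<lambda>z. P0 z - c) holomorphic_on B"
    using P0 by (intro holomorphic_intros) (auto simp: holomorphic_on_def field_differentiable_def
        intro: has_field_derivative_at_within)
  then show thesis
    using that[of "\<lambda>z. P0 z - c"] c unfolding B_def by blast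
qed

lemma real_holomorphic_on_primitive:
  assumes g: "real_holomorphic_on g S" and "open S"
    and G': "\<And>t. t \<in> S \<Longrightarrow> (G has_real_derivative g t) (at t)"
  shows "real_holomorphic_on G S"
  unfolding real_holomorphic_on_def
proof
  fix x assume "x \<in> S"
  obtain F where F: "F analytic_on {complex_of_real x}"
    and F_eq: "\<forall>\<^sub>F y in nhds x. F (complex_of_real y) = complex_of_real (g y)"
    using g \<open>x \<in> S\<close> unfolding real_holomorphic_on_def by blast
  obtain r1 where r1: "r1 > 0" "F holomorphic_on ball (complex_of_real x) r1"
    using F unfolding analytic_on_def by blast
  obtain r2 where r2: "r2 > 0" "\<And>y. dist y x < r2 \<Longrightarrow> F (complex_of_real y) = complex_of_real (g y)"
    using F_eq unfolding eventually_nhds_metric by blast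
  obtain r3 where r3: "r3 > 0" "ball x r3 \<subseteq> S"
    using \<open>open S\<close> \<open>x \<in> S\<close> open_contains_ball by blast
  define r where "r = min r1 (min r2 r3)"
  have "r > 0" using r1 r2 r3 by (simp add: r_def)
  have Fr: "F holomorphic_on ball (complex_of_real x) r"
    using r1(2) by (rule holomorphic_on_subset) (simp add: r_def subset_ball)
  have Fg: "F (complex_of_real t) = complex_of_real (g t)" if "t \<in> ball x r" for t
    using that r2(2)[of t] by (auto simp: r_def dist_commute)
  have G't: "(G has_real_derivative g t) (at t)" if "t \<in> ball x r" for t
  proof -
    have "t \<in> ball x r3" using that by (simp add: r_def)
    then show ?thesis using r3(2) G' by blast
  qed
  obtain P where P: "P holomorphic_on ball (complex_of_real x) r"
    "\<And>t. t \<in> ball x r \<Longrightarrow> P (complex_of_real t) = complex_of_real (G t)"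
    using holomorphic_extension_of_real_primitive[OF Fr Fg G't] by blast
  then have "P analytic_on {complex_of_real x}"
    using \<open>r > 0\<close> by (auto simp: analytic_on_def)
  moreover have "\<forall>\<^sub>F y in nhds x. P (complex_of_real y) = complex_of_real (G y)"
    using P(2) \<open>r > 0\<close> unfolding eventually_nhds_metric by (auto simp: dist_commute)
  ultimately show "\<exists>H. H analytic_on {complex_of_real x} \<and>
      (\<forall>\<^sub>F y in nhds x. H (complex_of_real y) = complex_of_real (G y))" by blast
qed

lemma DERIV_nonneg_imp_strict_less:
  fixes G G' :: "real \<Rightarrow> real"
  assumes "x < y" "continuous_on {x..y} G"
    and G': "\<And>t. t \<in> {x<..<y} \<Longrightarrow> (G has_real_derivative G' t) (at t) \<and> G' t \<ge> 0"
    and "\<exists>t\<in>{x<..<y}. G' t \<noteq> 0"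
  shows "G x < G y"
proof -
  have mono: "G a \<le> G b" if "x \<le> a" "a \<le> b" "b \<le> y" for a b
    using DERIV_nonneg_imp_increasing_open[of a b G] G' that
      continuous_on_subset[OF assms(2), of "{a..b}"]
    by (cases "a = b") force+
  have "G x \<noteq> G y"
  proof
    assume "G x = G y"
    then have const: "G t = G x" if "t \<in> {x..y}" for t
      using mono[of x t] mono[of t y] that by auto
    have "G' t = 0" if t: "t \<in> {x<..<y}" for t
    proof (rule DERIV_local_const)
      show "(G has_real_derivative G' t) (at t)" using G' t by blast
      show "0 < min (t - x) (y - t)" using t by auto
      show "\<forall>s. \<bar>t - s\<bar> < min (t - x) (y - t) \<longrightarrow> G t = G s"
      proof (intro allI impI)
        fix s assume "\<bar>t - s\<bar> < min (t - x) (y - t)"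
        then have "s \<in> {x..y}" by (simp add: abs_less_iff)
        then show "G t = G s" using t const[of s] const[of t] by simp
      qed
    qed
    then show False using assms(4) by blast
  qed
  then show ?thesis using mono[of x y] assms(1) by linarith
qed

lemma isCont_exists_left_less:
  fixes g :: "real \<Rightarrow> real"
  assumes "isCont g x" "g x < b" "0 < r"
  obtains y where "x - r < y" "y < x" "g y < b"
proof -
  have "\<forall>\<^sub>F y in at_left x. g y < b"
    using order_tendstoD(2)[OF assms(1)[unfolded isCont_def, THEN tendsto_within_subset[OF _
      subset_UNIV]]
        assms(2)] .
  moreover have "\<forall>\<^sub>F y in at_left x. y \<in> {x - r<..<x}"
    using \<open>0 < r\<close> by (intro eventually_at_left_real) simp
  ultimately have "\<forall>\<^sub>F y in at_left x. g y < b \<and> y \<in> {x - r<..<x}"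
    by (rule eventually_conj)
  then show thesis
    using eventually_happens'[OF trivial_limit_at_left_real] that by auto
qed

lemma Finf_weighted_integrable: "g \<in> Finf sl sh \<Longrightarrow> (\<lambda>s. g s * wt s) integrable_on {sl..sh}"
  unfolding Finf_def by blast

lemma Gf_eq_diff:
  assumes g: "g \<in> Finf sl sh" and mm: "mmfun v lam c \<in> {sl..sh}"
  shows "Gf sl sh p u v g lam c = p * integral {sl..mfun u lam c} (\<lambda>s. g s * wt s)
           - (1 - p) * integral {sl..mmfun v lam c} (\<lambda>s. g s * wt s)"
proof -
  have "integral {sl..mmfun v lam c} (\<lambda>s. g s * wt s) + integral {mmfun v lam c..sh} (\<lambda>s. g s * wt
    s)
        = integral {sl..sh} (\<lambda>s. g s * wt s)"
    using mm Finf_weighted_integrable[OF g] by (intro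
      Henstock_Kurzweil_Integration.integral_combine) auto
  also have "\<dots> = 0" using g unfolding Finf_def by blast
  finally have "integral {mmfun v lam c..sh} (\<lambda>s. g s * wt s)
      = - integral {sl..mmfun v lam c} (\<lambda>s. g s * wt s)" by linarith
  then show ?thesis unfolding Gf_def by simp
qed

lemma abs_wt_le: "0 < sl \<Longrightarrow> sl \<le> s \<Longrightarrow> \<bar>wt s\<bar> \<le> 1 / sl + 2"
proof -
  assume "0 < sl" "sl \<le> s"
  then have "\<bar>wt s\<bar> \<le> (1 + 2 * s) / s" "1 / s \<le> 1 / sl"
    unfolding wt_def by (auto simp: abs_div intro!: divide_right_mono frac_le)
  then show ?thesis using \<open>0 < sl\<close> \<open>sl \<le> s\<close> by (simp add: add_divide_distrib)
qed

lemma wt_nonneg: "0 < s \<Longrightarrow> s \<le> 1/2 \<Longrightarrow> wt s \<ge> 0"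
  unfolding wt_def by simp

lemma wt_nonpos: "0 < s \<Longrightarrow> 1/2 \<le> s \<Longrightarrow> wt s \<le> 0"
  unfolding wt_def by (simp add: divide_nonpos_pos)

lemma weighted_primitive_approx:
  assumes f: "f \<in> Finf sl sh" and g: "g \<in> Finf sl sh" and "0 < sl" "sl < sh"
    and x: "x \<in> {sl..sh}" and e: "\<And>s. s \<in> {sl<..<sh} \<Longrightarrow> \<bar>f s - g s\<bar> < e"
  shows "\<bar>integral {sl..x} (\<lambda>s. g s * wt s) - integral {sl..x} (\<lambda>s. f s * wt s)\<bar>
           \<le> e * (1 / sl + 2) * (sh - sl)"
proof -
  have int: "(\<lambda>s. h s * wt s) integrable_on {sl..x}" if "h \<in> Finf sl sh" for h
    using x by (intro integrable_subinterval_real[OF Finf_weighted_integrable[OF that]]) auto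
  have "e \<ge> 0"
    using e[of "(sl + sh) / 2"] \<open>sl < sh\<close> by fastforce
  have bound: "norm ((g s - f s) * wt s) \<le> e * (1 / sl + 2)" if "s \<in> {sl..x} - {sl, sh}" for s
  proof -
    have "s \<in> {sl<..<sh}" using that x by auto
    then have "\<bar>f s - g s\<bar> \<le> e" using e[of s] by simp
    then have "\<bar>f s - g s\<bar> * \<bar>wt s\<bar> \<le> e * (1 / sl + 2)"
      using abs_wt_le[OF \<open>0 < sl\<close>, of s] \<open>e \<ge> 0\<close> that by (intro mult_mono) auto
    then show ?thesis by (simp add: abs_mult abs_minus_commute)
  qed
  have "integral {sl..x} (\<lambda>s. g s * wt s) - integral {sl..x} (\<lambda>s. f s * wt s)
      = integral {sl..x} (\<lambda>s. (g s - f s) * wt s)"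
    using integral_diff[OF int[OF g] int[OF f]] by (simp add: algebra_simps)
  also have "norm \<dots> \<le> e * (1 / sl + 2) * measure lborel {sl..x}"
  proof (rule has_integral_bound_real[of _ "{sl, sh}", OF _ _ _ bound])
    show "0 \<le> e * (1 / sl + 2)" using \<open>e \<ge> 0\<close> \<open>0 < sl\<close> by simp
    have "(\<lambda>s. (g s - f s) * wt s) integrable_on {sl..x}"
      using integrable_diff[OF int[OF g] int[OF f]] by (simp add: left_diff_distrib)
    then show "((\<lambda>s. (g s - f s) * wt s) has_integral integral {sl..x} (\<lambda>s. (g s - f s) * wt s))
      {sl..x}"
      by (rule integrable_integral)
  qed simp
  also have "\<dots> \<le> e * (1 / sl + 2) * (sh - sl)"
    using x \<open>e \<ge> 0\<close> \<open>0 < sl\<close> by (intro mult_left_mono) auto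
  finally show ?thesis by simp
qed

locale analytic_signal =
  fixes sl sh :: real and f :: "real \<Rightarrow> real"
  assumes sl_pos: "0 < sl" and sl_less_sh: "sl < sh" and sh_less_1: "sh < 1"
    and f_Finf: "f \<in> Finf sl sh"
    and f_analytic: "real_analytic_on f {sl<..<sh}"
begin

lemma f_nonneg: "t \<in> {sl<..<sh} \<Longrightarrow> f t \<ge> 0"
  using f_Finf unfolding Finf_def by blast

definition H :: "real \<Rightarrow> real" where
  "H x = integral {sl..x} (\<lambda>s. f s * wt s)"

lemma H_sl: "H sl = 0"
  unfolding H_def by simp

lemma H_sh: "H sh = 0"
  using f_Finf unfolding Finf_def H_def by blast

lemma continuous_on_H: "continuous_on {sl..sh} H"
  unfolding H_def by (rule indefinite_integral_continuous_1[OF Finf_weighted_integrable[OF f_Finf]])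

lemma H_has_real_derivative:
  assumes "t \<in> {sl<..<sh}"
  shows "(H has_real_derivative f t * wt t) (at t)"
proof -
  have "isCont f t"
    using f_Finf assms by (auto simp: Finf_def continuous_on_eq_continuous_at)
  moreover have "isCont wt t"
    using assms sl_pos unfolding wt_def by (auto intro!: continuous_intros)
  ultimately have "continuous (at t within {sl..sh}) (\<lambda>s. f s * wt s)"
    by (simp add: continuous_at_imp_continuous_at_within)
  then have "(H has_vector_derivative f t * wt t) (at t within {sl..sh})"
    using integral_has_vector_derivative_continuous_at[OF Finf_weighted_integrable[OF f_Finf], of
      t "{}"]
      assms unfolding H_def by auto
  then show ?thesis
    using assms by (simp add: at_within_Icc_at has_real_derivative_iff_has_vector_derivative)
qed

lemma real_holomorphic_on_weighted_f: "real_holomorphic_on (\<lambda>s. f s * wt s) {sl<..<sh}"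
proof (rule real_holomorphic_on_mult)
  show "real_holomorphic_on f {sl<..<sh}"
    using f_analytic by (rule real_analytic_imp_real_holomorphic_on)
  show "real_holomorphic_on wt {sl<..<sh}"
    by (rule holomorphic_imp_real_holomorphic_on[of "\<lambda>z. (1 - 2 * z) / z" "- {0}"])
      (use sl_pos in \<open>auto intro!: holomorphic_intros simp: wt_def\<close>)
qed

lemma real_holomorphic_on_H: "real_holomorphic_on H {sl<..<sh}"
  using real_holomorphic_on_weighted_f by (rule real_holomorphic_on_primitive)
    (auto intro: H_has_real_derivative)

lemma weighted_f_nonzero_in_interval:
  assumes "x < y" "{x<..<y} \<subseteq> {sl<..<sh}"
  shows "\<exists>t\<in>{x<..<y}. f t * wt t \<noteq> 0"
proof (rule ccontr)
  assume "\<not> ?thesis"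
  have mid: "(x + y) / 2 \<in> {x<..<y}"
    using assms(1) by auto
  with \<open>\<not> ?thesis\<close> have "\<forall>\<^sub>F t in at ((x + y) / 2). f t * wt t = 0"
    by (intro eventually_at_in_open'[THEN eventually_mono, of "{x<..<y}"]) auto
  then have "\<exists>\<^sub>F t in at ((x + y) / 2). f t * wt t = 0"
    by (simp add: eventually_frequently)
  then have zero: "f t * wt t = 0" if "t \<in> {sl<..<sh}" for t
    using real_holomorphic_on_eq_zero[OF real_holomorphic_on_weighted_f open_greaterThanLessThan
        connected_Ioo _ _ that] mid assms(2) by blast
  have "f t = 0" if "t \<in> {sl<..<sh} - {1/2}" for t
  proof -
    have "wt t \<noteq> 0" using that sl_pos by (auto simp: wt_def)
    then show ?thesis using zero[of t] that by simp
  qed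
  then have "integral {sl..sh} f = integral {sl..sh} (\<lambda>_. 0)"
    by (intro integral_spike[of "{sl, sh, 1/2}"]) auto
  then show False
    using f_Finf unfolding Finf_def by simp
qed

lemma H_strict_mono:
  assumes "sl \<le> x" "x < y" "y \<le> 1/2" "y \<le> sh"
  shows "H x < H y"
proof (rule DERIV_nonneg_imp_strict_less[OF \<open>x < y\<close>])
  show "continuous_on {x..y} H"
    using assms by (intro continuous_on_subset[OF continuous_on_H]) auto
  show "(H has_real_derivative f t * wt t) (at t) \<and> f t * wt t \<ge> 0" if "t \<in> {x<..<y}" for t
    using that assms H_has_real_derivative[of t] f_nonneg[of t] wt_nonneg[of t] sl_pos by auto
  show "\<exists>t\<in>{x<..<y}. f t * wt t \<noteq> 0"
    using assms by (intro weighted_f_nonzero_in_interval) auto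
qed

lemma H_strict_antimono:
  assumes "sl \<le> x" "1/2 \<le> x" "x < y" "y \<le> sh"
  shows "H y < H x"
proof -
  have "- H x < - H y"
  proof (rule DERIV_nonneg_imp_strict_less[OF \<open>x < y\<close>])
    show "continuous_on {x..y} (\<lambda>t. - H t)"
      using assms by (intro continuous_intros continuous_on_subset[OF continuous_on_H]) auto
    show "((\<lambda>t. - H t) has_real_derivative - (f t * wt t)) (at t) \<and> - (f t * wt t) \<ge> 0"
      if "t \<in> {x<..<y}" for t
      using that assms H_has_real_derivative[of t] f_nonneg[of t] wt_nonpos[of t] sl_pos
      by (auto intro!: derivative_intros simp: mult_nonneg_nonpos)
    have "{x<..<y} \<subseteq> {sl<..<sh}"
      using assms by auto
    then show "\<exists>t\<in>{x<..<y}. - (f t * wt t) \<noteq> 0"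
      using weighted_f_nonzero_in_interval[OF \<open>x < y\<close>] by auto
  qed
  then show ?thesis by simp
qed

lemma H_pos: "x \<in> {sl<..<sh} \<Longrightarrow> H x > 0"
  using H_strict_mono[of sl x] H_strict_antimono[of x sh] H_sl H_sh
  by (cases "x \<le> 1/2") auto

lemma H_inj_same_side:
  assumes "a \<in> {sl..sh}" "b \<in> {sl..sh}" "(a \<le> 1/2 \<and> b \<le> 1/2) \<or> (1/2 \<le> a \<and> 1/2 \<le> b)"
    and "H a = H b"
  shows "a = b"
  using assms H_strict_mono[of a b] H_strict_mono[of b a] H_strict_antimono[of a b]
    H_strict_antimono[of b a]
  by (cases a b rule: linorder_cases) auto

end

lemma mfun_denom_pos:
  fixes lam u c :: real
  assumes "lam > 0" "u > 0" "-1 \<le> c" "c \<le> u"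
  shows "lam * (1 + c) + (u - c) > 0"
  using assms by (cases "c = -1") (auto intro: add_pos_nonneg)

lemma mmfun_denom_pos:
  fixes lam v c :: real
  assumes "lam > 0" "v > 0" "-v \<le> c" "c \<le> 1"
  shows "lam * (1 - c) + (v + c) > 0"
  using assms by (cases "c = 1") (auto intro: add_pos_nonneg)

lemma mfun_strict_mono:
  assumes "lam > 0" "u > 0" "-1 \<le> c1" "c1 < c2" "c2 \<le> u"
  shows "mfun u lam c1 < mfun u lam c2"
proof -
  have "(1 + c1) * (u - c2) < (1 + c2) * (u - c1)"
    using assms by (simp add: algebra_simps) (smt (verit) mult_strict_right_mono)
  then have "lam * ((1 + c1) * (u - c2)) < lam * ((1 + c2) * (u - c1))"
    using assms(1) by simp
  then have "lam * (1 + c1) * (lam * (1 + c2) + (u - c2)) < lam * (1 + c2) * (lam * (1 + c1) + (u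
    - c1))"
    by (simp add: algebra_simps)
  then show ?thesis
    using mfun_denom_pos[of lam u c1] mfun_denom_pos[of lam u c2] assms
    unfolding mfun_def by (simp add: divide_less_eq less_divide_eq mult.commute)
qed

lemma mmfun_strict_antimono:
  assumes "lam > 0" "v > 0" "-v \<le> c1" "c1 < c2" "c2 \<le> 1"
  shows "mmfun v lam c2 < mmfun v lam c1"
proof -
  have "(1 - c2) * (v + c1) < (1 - c1) * (v + c2)"
    using assms by (simp add: algebra_simps) (smt (verit) mult_strict_right_mono)
  then have "lam * ((1 - c2) * (v + c1)) < lam * ((1 - c1) * (v + c2))"
    using assms(1) by simp
  then have "lam * (1 - c2) * (lam * (1 - c1) + (v + c1)) < lam * (1 - c1) * (lam * (1 - c2) + (v
    + c2))"
    by (simp add: algebra_simps)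
  then show ?thesis
    using mmfun_denom_pos[of lam v c1] mmfun_denom_pos[of lam v c2] assms
    unfolding mmfun_def by (simp add: divide_less_eq less_divide_eq mult.commute)
qed

lemma mfun_mmfun_swap_imp_eq:
  assumes "lam > 0" "u \<noteq> v"
    and "lam * (1 + c1) + (u - c1) > 0" "lam * (1 + c2) + (u - c2) > 0"
    and "lam * (1 - c1) + (v + c1) > 0" "lam * (1 - c2) + (v + c2) > 0"
    and "mfun u lam c2 = mmfun v lam c1" "mmfun v lam c2 = mfun u lam c1"
  shows "c1 = c2"
proof -
  have "lam * (1 + c2) * (lam * (1 - c1) + (v + c1)) = lam * (1 - c1) * (lam * (1 + c2) + (u - c2))"
    using assms(7) assms(4,5) unfolding mfun_def mmfun_def by (simp add: field_simps)
  then have "lam * ((1 + c2) * (v + c1)) = lam * ((1 - c1) * (u - c2))"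
    by (simp add: algebra_simps)
  then have e1: "(1 + c2) * (v + c1) = (1 - c1) * (u - c2)"
    using assms(1) by simp
  have "lam * (1 - c2) * (lam * (1 + c1) + (u - c1)) = lam * (1 + c1) * (lam * (1 - c2) + (v + c2))"
    using assms(8) assms(3,6) unfolding mfun_def mmfun_def by (simp add: field_simps)
  then have "lam * ((1 - c2) * (u - c1)) = lam * ((1 + c1) * (v + c2))"
    by (simp add: algebra_simps)
  then have e2: "(1 - c2) * (u - c1) = (1 + c1) * (v + c2)"
    using assms(1) by simp
  have "(c2 - c1) * (v - u) = 0"
    using e1 e2 by (simp add: algebra_simps)
  then show ?thesis using assms(2) by simp
qed

lemma mfun_0: "mfun u lam 0 = lam / (lam + u)"
  unfolding mfun_def by simp

lemma mmfun_0: "mmfun v lam 0 = lam / (lam + v)"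
  unfolding mmfun_def by simp

lemma mfun_moebius_c: "mfun u lam c = (lam * c + lam) / ((lam - 1) * c + (lam + u))"
  unfolding mfun_def by (simp add: algebra_simps)

lemma mmfun_moebius_c: "mmfun v lam c = ((- lam) * c + lam) / ((1 - lam) * c + (lam + v))"
  unfolding mmfun_def by (simp add: algebra_simps)

definition odds :: "real \<Rightarrow> real" where
  "odds s = s / (1 - s)"

lemma ratio_less_iff: "0 < lam \<Longrightarrow> 0 < w \<Longrightarrow> s < 1 \<Longrightarrow> lam / (lam + w) < s \<longleftrightarrow> lam < w * odds s"
  unfolding odds_def by (simp add: field_simps)

lemma less_ratio_iff: "0 < lam \<Longrightarrow> 0 < w \<Longrightarrow> s < 1 \<Longrightarrow> s < lam / (lam + w) \<longleftrightarrow> w * odds s < lam"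
  unfolding odds_def by (simp add: field_simps)

lemma ratio_eq_iff: "0 < lam \<Longrightarrow> 0 < w \<Longrightarrow> s < 1 \<Longrightarrow> lam / (lam + w) = s \<longleftrightarrow> lam = w * odds s"
  unfolding odds_def by (simp add: field_simps)

locale signal_game = analytic_signal +
  fixes p u v :: real
  assumes p_pos: "0 < p" and p_less_1: "p < 1"
    and u_pos: "0 < u" and v_pos: "0 < v" and u_neq_v: "u \<noteq> v"
    and E0_nonempty: "Eset sl sh u v 0 \<noteq> {}"
begin

text \<open>\<open>Phi\<close> is \<open>G\<^sub>f\<close> written through the primitive \<open>H\<close>; by \<open>Gf_eq_diff\<close> the two agree
  whenever \<open>mfun\<close> and \<open>mmfun\<close> lie in \<open>[sl, sh]\<close>.\<close>

definition Phi :: "real \<Rightarrow> real \<Rightarrow> real" where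
  "Phi lam c = p * H (mfun u lam c) - (1 - p) * H (mmfun v lam c)"

definition lam_lo :: real where "lam_lo = max u v * odds sl"
definition lam_hi :: real where "lam_hi = min u v * odds sh"

lemma odds_sl_pos: "0 < odds sl"
  using sl_pos sl_less_sh sh_less_1 by (simp add: odds_def)

lemma odds_sl_less_odds_sh: "odds sl < odds sh"
  using sl_pos sl_less_sh sh_less_1 by (simp add: odds_def frac_less2 divide_strict_right_mono)

lemma lam_lo_pos: "0 < lam_lo"
  using odds_sl_pos u_pos v_pos by (simp add: lam_lo_def)

lemma ratio_in_Ioo_iff:
  "0 < lam \<Longrightarrow> 0 < w \<Longrightarrow> lam / (lam + w) \<in> {sl<..<sh} \<longleftrightarrow> w * odds sl < lam \<and> lam < w * odds sh"
  using less_ratio_iff[of lam w sl] ratio_less_iff[of lam w sh] sl_less_sh sh_less_1 by auto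

lemma lam_lo_eq: "lam_lo = max (u * odds sl) (v * odds sl)"
  using odds_sl_pos by (simp add: lam_lo_def max_mult_distrib_right)

lemma lam_hi_eq: "lam_hi = min (u * odds sh) (v * odds sh)"
  using odds_sl_pos odds_sl_less_odds_sh by (simp add: lam_hi_def min_mult_distrib_right)

lemma Eset_0_eq: "Eset sl sh u v 0 = {lam_lo<..<lam_hi}"
proof -
  have "lam \<in> Eset sl sh u v 0 \<longleftrightarrow> lam \<in> {lam_lo<..<lam_hi}" for lam
  proof (cases "lam > 0")
    case True
    then show ?thesis
      using ratio_in_Ioo_iff[OF True u_pos] ratio_in_Ioo_iff[OF True v_pos]
      unfolding Eset_def mfun_0 mmfun_0 lam_lo_eq lam_hi_eq by auto
  next
    case False
    then show ?thesis using lam_lo_pos unfolding Eset_def by auto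
  qed
  then show ?thesis by blast
qed

lemma lam_lo_less_lam_hi: "lam_lo < lam_hi"
  using E0_nonempty Eset_0_eq by auto

lemma ratio_in_Icc_iff:
  "0 < lam \<Longrightarrow> 0 < w \<Longrightarrow> lam / (lam + w) \<in> {sl..sh} \<longleftrightarrow> w * odds sl \<le> lam \<and> lam \<le> w * odds sh"
  using less_ratio_iff[of lam w sh] ratio_less_iff[of lam w sl] sl_less_sh sh_less_1
  by (auto simp: not_less[symmetric])

lemma Phi_0_nonzero:
  assumes "lam / (lam + u) \<in> {sl, sh} \<and> lam / (lam + v) \<in> {sl<..<sh}
      \<or> lam / (lam + u) \<in> {sl<..<sh} \<and> lam / (lam + v) \<in> {sl, sh}"
  shows "Phi lam 0 \<noteq> 0"
  using assms H_sl H_sh H_pos[of "lam / (lam + u)"] H_pos[of "lam / (lam + v)"] p_pos p_less_1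
  by (auto simp: Phi_def mfun_0 mmfun_0)

lemma Phi_0_endpoint_nonzero:
  assumes "lam \<in> {lam_lo, lam_hi}"
  shows "Phi lam 0 \<noteq> 0"
proof (rule Phi_0_nonzero)
  have min_max: "0 < min u v" "min u v < max u v" "0 < max u v"
    using u_pos v_pos u_neq_v by auto
  have "0 < lam_hi" using lam_lo_pos lam_lo_less_lam_hi by simp
  have "max u v * odds sl < lam_hi" "lam_hi < max u v * odds sh"
    using lam_lo_less_lam_hi min_max odds_sl_less_odds_sh odds_sl_pos by (simp_all add: lam_lo_def
      lam_hi_def)
  then have at_lam_hi: "lam_hi / (lam_hi + min u v) = sh" "lam_hi / (lam_hi + max u v) \<in> {sl<..<sh}"
    using ratio_eq_iff[OF \<open>0 < lam_hi\<close> min_max(1) sh_less_1] ratio_in_Ioo_iff[OF \<open>0 < lam_hi\<close>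
      min_max(3)]
    by (simp_all add: lam_hi_def)
  have "min u v * odds sl < lam_lo" "lam_lo < min u v * odds sh"
    using lam_lo_less_lam_hi min_max odds_sl_pos by (simp_all add: lam_lo_def lam_hi_def)
  then have at_lam_lo: "lam_lo / (lam_lo + max u v) = sl" "lam_lo / (lam_lo + min u v) \<in> {sl<..<sh}"
    using ratio_eq_iff[OF lam_lo_pos min_max(3), of sl] ratio_in_Ioo_iff[OF lam_lo_pos min_max(1)]
      sl_less_sh sh_less_1 by (simp_all add: lam_lo_def)
  from at_lam_lo at_lam_hi show "lam / (lam + u) \<in> {sl, sh} \<and> lam / (lam + v) \<in> {sl<..<sh}
      \<or> lam / (lam + u) \<in> {sl<..<sh} \<and> lam / (lam + v) \<in> {sl, sh}"
    using assms u_neq_v by (cases "u < v") (auto simp: max_def min_def)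
qed

definition c_lo :: real where "c_lo = max (-1) (-v)"
definition c_hi :: real where "c_hi = min u 1"

lemma c_lo_neg: "c_lo < 0" and c_hi_pos: "0 < c_hi"
  using u_pos v_pos by (simp_all add: c_lo_def c_hi_def)

lemma mfun_denom_pos_Icc: "0 < lam \<Longrightarrow> c \<in> {c_lo..c_hi} \<Longrightarrow> lam * (1 + c) + (u - c) > 0"
  using mfun_denom_pos[of lam u c] u_pos by (simp add: c_lo_def c_hi_def)

lemma mmfun_denom_pos_Icc: "0 < lam \<Longrightarrow> c \<in> {c_lo..c_hi} \<Longrightarrow> lam * (1 - c) + (v + c) > 0"
  using mmfun_denom_pos[of lam v c] v_pos by (simp add: c_lo_def c_hi_def)

lemma mfun_strict_mono_Icc: "0 < lam \<Longrightarrow> c_lo \<le> c1 \<Longrightarrow> c1 < c2 \<Longrightarrow> c2 \<le> c_hi \<Longrightarrow> mfun u lam c1 < mfun u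
  lam c2"
  using mfun_strict_mono[of lam u c1 c2] u_pos by (simp add: c_lo_def c_hi_def)

lemma mmfun_strict_antimono_Icc: "0 < lam \<Longrightarrow> c_lo \<le> c1 \<Longrightarrow> c1 < c2 \<Longrightarrow> c2 \<le> c_hi \<Longrightarrow> mmfun v lam c2 <
  mmfun v lam c1"
  using mmfun_strict_antimono[of lam v c1 c2] v_pos by (simp add: c_lo_def c_hi_def)

lemma continuous_on_mfun_joint: "continuous_on ({0<..} \<times> {c_lo..c_hi}) (\<lambda>z. mfun u (fst z) (snd z))"
  unfolding mfun_def
  by (intro continuous_intros) (use mfun_denom_pos_Icc in \<open>force simp: less_eq_real_def\<close>)

lemma continuous_on_mmfun_joint: "continuous_on ({0<..} \<times> {c_lo..c_hi}) (\<lambda>z. mmfun v (fst z) (snd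
  z))"
  unfolding mmfun_def
  by (intro continuous_intros) (use mmfun_denom_pos_Icc in \<open>force simp: less_eq_real_def\<close>)

definition Phi_domain :: "(real \<times> real) set" where
  "Phi_domain = {(lam, c). 0 < lam \<and> c \<in> {c_lo..c_hi} \<and> mfun u lam c \<in> {sl..sh} \<and> mmfun v lam c \<in>
    {sl..sh}}"

lemma continuous_on_Phi: "continuous_on Phi_domain (\<lambda>(lam, c). Phi lam c)"
proof -
  have Phi_domain_subset: "Phi_domain \<subseteq> {0<..} \<times> {c_lo..c_hi}"
    by (auto simp: Phi_domain_def)
  have "continuous_on Phi_domain (\<lambda>z. H (mfun u (fst z) (snd z)))"
    by (rule continuous_on_compose2[OF continuous_on_H continuous_on_subset[OF
      continuous_on_mfun_joint Phi_domain_subset]])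
      (auto simp: Phi_domain_def)
  moreover have "continuous_on Phi_domain (\<lambda>z. H (mmfun v (fst z) (snd z)))"
    by (rule continuous_on_compose2[OF continuous_on_H continuous_on_subset[OF
      continuous_on_mmfun_joint Phi_domain_subset]])
      (auto simp: Phi_domain_def)
  ultimately show ?thesis
    unfolding Phi_def case_prod_beta by (intro continuous_intros)
qed

lemma real_holomorphic_on_H_combination:
  assumes "real_holomorphic_on \<phi> S" "real_holomorphic_on \<psi> S"
    and "\<phi> ` S \<subseteq> {sl<..<sh}" "\<psi> ` S \<subseteq> {sl<..<sh}"
  shows "real_holomorphic_on (\<lambda>x. p * H (\<phi> x) - (1 - p) * H (\<psi> x)) S"
  using assms by (intro real_holomorphic_on_diff real_holomorphic_on_mult real_holomorphic_on_const
      real_holomorphic_on_compose[OF real_holomorphic_on_H])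

lemma in_Eset_0: "lam \<in> {lam_lo<..<lam_hi} \<Longrightarrow> mfun u lam 0 \<in> {sl<..<sh} \<and> mmfun v lam 0 \<in> {sl<..<sh}"
  using Eset_0_eq unfolding Eset_def by blast

lemma in_Phi_domain_0: "lam \<in> {lam_lo..lam_hi} \<Longrightarrow> (lam, 0) \<in> Phi_domain"
  using ratio_in_Icc_iff[of lam u] ratio_in_Icc_iff[of lam v] lam_lo_pos u_pos v_pos c_lo_neg
    c_hi_pos
  by (auto simp: Phi_domain_def mfun_0 mmfun_0 lam_lo_eq lam_hi_eq)

lemma countable_Phi_0_zeros: "countable {lam \<in> {lam_lo<..<lam_hi}. Phi lam 0 = 0}"
proof (rule ccontr)
  assume uncountable: "\<not> ?thesis"
  have "real_holomorphic_on (\<lambda>lam. (1 * lam + 0) / (1 * lam + w)) {lam_lo<..<lam_hi}" if "0 < w"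
    for w
    using lam_lo_pos that by (intro real_holomorphic_on_moebius) auto
  then have "real_holomorphic_on (\<lambda>lam. mfun u lam 0) {lam_lo<..<lam_hi}"
    "real_holomorphic_on (\<lambda>lam. mmfun v lam 0) {lam_lo<..<lam_hi}"
    using u_pos v_pos by (simp_all add: mfun_0 mmfun_0)
  then have "real_holomorphic_on (\<lambda>lam. Phi lam 0) {lam_lo<..<lam_hi}"
    unfolding Phi_def by (rule real_holomorphic_on_H_combination) (use in_Eset_0 in auto)
  then have "Phi lam 0 = 0" if "lam \<in> {lam_lo<..<lam_hi}" for lam
    using real_holomorphic_on_countable_zeros[OF _ open_greaterThanLessThan connected_Ioo that]
      uncountable by auto
  moreover have "continuous_on {lam_lo..lam_hi} (\<lambda>lam. Phi lam 0)"
    by (rule continuous_on_compose2[OF continuous_on_Phi, of _ "\<lambda>lam. (lam, 0)", simplified])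
      (auto intro!: continuous_intros in_Phi_domain_0)
  ultimately have "Phi lam_lo 0 = 0"
    using continuous_constant_on_closure[of "{lam_lo<..<lam_hi}" "\<lambda>lam. Phi lam 0" 0 lam_lo]
      lam_lo_less_lam_hi by auto
  then show False
    using Phi_0_endpoint_nonzero by simp
qed

lemma continuous_on_mfun: "0 < lam \<Longrightarrow> continuous_on {c_lo..c_hi} (mfun u lam)"
  unfolding mfun_def by (intro continuous_intros) (use mfun_denom_pos_Icc[of lam] in force)

lemma continuous_on_mmfun: "0 < lam \<Longrightarrow> continuous_on {c_lo..c_hi} (mmfun v lam)"
  unfolding mmfun_def by (intro continuous_intros) (use mmfun_denom_pos_Icc[of lam] in force)

definition inner_cs :: "real \<Rightarrow> real set" where
  "inner_cs lam = {c \<in> {c_lo<..<c_hi}. mfun u lam c \<in> {sl<..<sh} \<and> mmfun v lam c \<in> {sl<..<sh}}"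

lemma open_inner_cs: "0 < lam \<Longrightarrow> open (inner_cs lam)"
proof -
  assume "0 < lam"
  have "continuous_on {c_lo<..<c_hi} (\<lambda>c. (mfun u lam c, mmfun v lam c))"
    using continuous_on_mfun[OF \<open>0 < lam\<close>] continuous_on_mmfun[OF \<open>0 < lam\<close>]
    by (intro continuous_intros) (auto elim: continuous_on_subset)
  moreover have "inner_cs lam = {c_lo<..<c_hi} \<inter> (\<lambda>c. (mfun u lam c, mmfun v lam c)) -`
    ({sl<..<sh} \<times> {sl<..<sh})"
    unfolding inner_cs_def by auto
  ultimately show ?thesis
    by (metis continuous_open_preimage open_Times open_greaterThanLessThan)
qed

lemma connected_inner_cs: "0 < lam \<Longrightarrow> connected (inner_cs lam)"
proof -
  assume "0 < lam"
  have "x \<in> inner_cs lam" if "a \<in> inner_cs lam" "b \<in> inner_cs lam" "a \<le> x" "x \<le> b" for a b x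
  proof -
    have "mfun u lam a \<le> mfun u lam x" "mfun u lam x \<le> mfun u lam b"
      "mmfun v lam x \<le> mmfun v lam a" "mmfun v lam b \<le> mmfun v lam x"
      using that mfun_strict_mono_Icc[OF \<open>0 < lam\<close>] mmfun_strict_antimono_Icc[OF \<open>0 < lam\<close>]
      unfolding inner_cs_def by (smt (verit) greaterThanLessThan_iff mem_Collect_eq)+
    then show ?thesis using that unfolding inner_cs_def by auto
  qed
  then have "is_interval (inner_cs lam)"
    unfolding is_interval_1 by blast
  then show ?thesis by (rule is_interval_connected)
qed

lemma real_holomorphic_on_Phi_inner_cs: "0 < lam \<Longrightarrow> real_holomorphic_on (Phi lam) (inner_cs lam)"
proof -
  assume "0 < lam"
  have den: "(lam - 1) * c + (lam + u) \<noteq> 0" "(1 - lam) * c + (lam + v) \<noteq> 0" if "c \<in> inner_cs lam"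
    for c
    using that mfun_denom_pos_Icc[OF \<open>0 < lam\<close>, of c] mmfun_denom_pos_Icc[OF \<open>0 < lam\<close>, of c]
    by (auto simp: inner_cs_def algebra_simps)
  have "real_holomorphic_on (mfun u lam) (inner_cs lam)"
    unfolding mfun_moebius_c[abs_def] by (rule real_holomorphic_on_moebius) (fact den)
  moreover have "real_holomorphic_on (mmfun v lam) (inner_cs lam)"
    unfolding mmfun_moebius_c[abs_def] by (rule real_holomorphic_on_moebius) (fact den)
  ultimately have "real_holomorphic_on (\<lambda>c. p * H (mfun u lam c) - (1 - p) * H (mmfun v lam c))
    (inner_cs lam)"
    by (rule real_holomorphic_on_H_combination) (auto simp: inner_cs_def)
  then show ?thesis
    by (simp add: Phi_def[abs_def])
qed

lemma mfun_less_mmfun_c_lo: "0 < lam \<Longrightarrow> mfun u lam c_lo < mmfun v lam c_lo"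
proof (cases "v \<le> 1")
  case True
  assume "0 < lam"
  then have "0 \<le> lam * (1 - v)" using True by simp
  then have "mfun u lam c_lo < 1"
    using u_pos v_pos True by (simp add: c_lo_def mfun_def divide_less_eq)
  moreover have "mmfun v lam c_lo = 1"
    using \<open>0 < lam\<close> v_pos True by (simp add: c_lo_def mmfun_def)
  ultimately show ?thesis by simp
next
  case False
  assume "0 < lam"
  then show ?thesis
    using False by (simp add: c_lo_def mfun_def mmfun_def add_pos_pos)
qed

lemma mmfun_less_mfun_c_hi: "0 < lam \<Longrightarrow> mmfun v lam c_hi < mfun u lam c_hi"
proof (cases "u \<le> 1")
  case True
  assume "0 < lam"
  then have "0 \<le> lam * (1 - u)" using True by simp
  then have "mmfun v lam c_hi < 1"
    using u_pos v_pos True by (simp add: c_hi_def mmfun_def divide_less_eq)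
  moreover have "mfun u lam c_hi = 1"
    using \<open>0 < lam\<close> u_pos True by (simp add: c_hi_def mfun_def)
  ultimately show ?thesis by simp
next
  case False
  assume "0 < lam"
  then show ?thesis
    using False by (simp add: c_hi_def mfun_def mmfun_def add_pos_pos)
qed

lemma crossing_point:
  assumes lam: "lam \<in> {lam_lo<..<lam_hi}"
  obtains cs where "cs \<in> inner_cs lam" "mfun u lam cs = mmfun v lam cs"
proof -
  have "0 < lam" using lam lam_lo_pos by simp
  obtain cs where cs: "c_lo \<le> cs" "cs \<le> c_hi" "mfun u lam cs - mmfun v lam cs = 0"
    using IVT'[of "\<lambda>c. mfun u lam c - mmfun v lam c" c_lo 0 c_hi] c_lo_neg c_hi_pos
      mfun_less_mmfun_c_lo[OF \<open>0 < lam\<close>] mmfun_less_mfun_c_hi[OF \<open>0 < lam\<close>]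
      continuous_on_mfun[OF \<open>0 < lam\<close>] continuous_on_mmfun[OF \<open>0 < lam\<close>]
    by (force intro: continuous_intros)
  then have eq: "mfun u lam cs = mmfun v lam cs" by simp
  then have "cs \<noteq> c_lo" "cs \<noteq> c_hi"
    using mfun_less_mmfun_c_lo[OF \<open>0 < lam\<close>] mmfun_less_mfun_c_hi[OF \<open>0 < lam\<close>] by auto
  have "mfun u lam cs \<in> {sl<..<sh}"
  proof (cases "cs \<le> 0")
    case True
    then have "mfun u lam cs \<le> mfun u lam 0" "mmfun v lam 0 \<le> mmfun v lam cs"
      using mfun_strict_mono_Icc[OF \<open>0 < lam\<close>, of cs 0] mmfun_strict_antimono_Icc[OF \<open>0 < lam\<close>, of
        cs 0]
        cs c_hi_pos by (cases "cs = 0"; force)+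
    then show ?thesis using in_Eset_0[OF lam] eq by auto
  next
    case False
    then have "mfun u lam 0 \<le> mfun u lam cs" "mmfun v lam cs \<le> mmfun v lam 0"
      using mfun_strict_mono_Icc[OF \<open>0 < lam\<close>, of 0 cs] mmfun_strict_antimono_Icc[OF \<open>0 < lam\<close>, of
        0 cs]
        cs c_lo_neg by force+
    then show ?thesis using in_Eset_0[OF lam] eq by auto
  qed
  then have "cs \<in> inner_cs lam"
    using cs \<open>cs \<noteq> c_lo\<close> \<open>cs \<noteq> c_hi\<close> eq unfolding inner_cs_def by auto
  then show thesis using eq that by blast
qed

lemma inner_cs_subset: "inner_cs lam \<subseteq> {c_lo<..<c_hi}"
  unfolding inner_cs_def by blast

lemma isCont_mfun_mmfun:
  assumes "0 < lam" "c \<in> inner_cs lam"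
  shows "isCont (mfun u lam) c" "isCont (mmfun v lam) c"
proof -
  have "c \<in> interior {c_lo..c_hi}" using assms(2) inner_cs_subset[of lam] by auto
  then show "isCont (mfun u lam) c" "isCont (mmfun v lam) c"
    using continuous_on_interior continuous_on_mfun[OF \<open>0 < lam\<close>] continuous_on_mmfun[OF \<open>0 < lam\<close>]
    by blast+
qed

lemma mfun_mmfun_order_inner_cs:
  assumes "0 < lam" "c1 \<in> inner_cs lam" "c2 \<in> inner_cs lam" "c1 < c2"
  shows "mfun u lam c1 < mfun u lam c2" "mmfun v lam c2 < mmfun v lam c1"
  using assms inner_cs_subset mfun_strict_mono_Icc[of lam c1 c2] mmfun_strict_antimono_Icc[of lam
    c1 c2] by force+

lemma H_symmetric_crossing_off_half_absurd:
  assumes lam: "lam \<in> {lam_lo<..<lam_hi}"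
    and sym: "\<And>c. c \<in> inner_cs lam \<Longrightarrow> H (mfun u lam c) = H (mmfun v lam c)"
    and cs: "cs \<in> inner_cs lam" "mfun u lam cs = mmfun v lam cs" "mfun u lam cs \<noteq> 1/2"
  shows False
proof -
  have "0 < lam" using lam lam_lo_pos by simp
  define e where "e = \<bar>mfun u lam cs - 1/2\<bar>"
  have "e > 0" using cs(3) by (simp add: e_def)
  have "\<forall>\<^sub>F c in at cs. c \<in> inner_cs lam \<and> c \<noteq> cs \<and>
      dist (mfun u lam c) (mfun u lam cs) < e \<and> dist (mmfun v lam c) (mmfun v lam cs) < e"
    using eventually_at_in_open'[OF open_inner_cs[OF \<open>0 < lam\<close>] cs(1)] eventually_neq_at_within
      isCont_mfun_mmfun[OF \<open>0 < lam\<close> cs(1), unfolded isCont_def, THEN tendstoD, OF \<open>e > 0\<close>]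
    by eventually_elim auto
  then obtain c where c: "c \<in> inner_cs lam" "c \<noteq> cs"
    "\<bar>mfun u lam c - mfun u lam cs\<bar> < e" "\<bar>mmfun v lam c - mfun u lam cs\<bar> < e"
    using eventually_happens'[OF at_neq_bot] cs(2) by (fastforce simp: dist_real_def)
  have "mfun u lam c \<noteq> mmfun v lam c"
    using c(1,2) cs(1,2) mfun_mmfun_order_inner_cs[OF \<open>0 < lam\<close>] by (cases c cs rule:
      linorder_cases) force+
  moreover have "(mfun u lam c \<le> 1/2 \<and> mmfun v lam c \<le> 1/2) \<or> (1/2 \<le> mfun u lam c \<and> 1/2 \<le> mmfun v
    lam c)"
    using c(3,4) unfolding e_def by (cases "mfun u lam cs \<le> 1/2") auto
  ultimately show False
    using H_inj_same_side sym[OF c(1)] c(1) unfolding inner_cs_def by auto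
qed

lemma H_symmetric_crossing_at_half_absurd:
  assumes lam: "lam \<in> {lam_lo<..<lam_hi}"
    and sym: "\<And>c. c \<in> inner_cs lam \<Longrightarrow> H (mfun u lam c) = H (mmfun v lam c)"
    and cs: "cs \<in> inner_cs lam" "mfun u lam cs = mmfun v lam cs" "mfun u lam cs = 1/2"
  shows False
proof -
  have "0 < lam" using lam lam_lo_pos by simp
  note order = mfun_mmfun_order_inner_cs[OF \<open>0 < lam\<close>]
  obtain r where "r > 0" and r: "cball cs r \<subseteq> inner_cs lam"
    using open_inner_cs[OF \<open>0 < lam\<close>] cs(1) open_contains_cball by blast
  then have in_inner: "c \<in> inner_cs lam" if "cs - r \<le> c" "c \<le> cs + r" for c
    using that by (auto simp: dist_real_def subset_iff)
  have "mmfun v lam cs < mfun u lam (cs + r)"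
    using order(1)[OF cs(1) in_inner] \<open>r > 0\<close> cs(2) by simp
  then obtain c1 where c1: "cs - r < c1" "c1 < cs" "mmfun v lam c1 < mfun u lam (cs + r)"
    using isCont_exists_left_less[OF isCont_mfun_mmfun(2)[OF \<open>0 < lam\<close> cs(1)] _ \<open>r > 0\<close>] by blast
  have c1_in: "c1 \<in> inner_cs lam" using c1 in_inner by simp
  have "mfun u lam c1 < 1/2" "1/2 < mmfun v lam c1"
    using order[OF c1_in cs(1) c1(2)] cs by auto
  \<comment> \<open>Reflect \<open>mmfun v lam c1\<close> through the crossing point: some \<open>c2 > cs\<close> has
    \<open>mfun u lam c2 = mmfun v lam c1\<close>; the symmetry of \<open>H\<close> then forces the swapped identity
    \<open>mmfun v lam c2 = mfun u lam c1\<close>, which is only possible for \<open>c1 = c2\<close>.\<close>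
  moreover have "continuous_on {cs..cs + r} (mfun u lam)"
    using continuous_on_mfun[OF \<open>0 < lam\<close>] in_inner[of cs] in_inner[of "cs + r"] inner_cs_subset
      \<open>r > 0\<close>
    by (elim continuous_on_subset) force
  ultimately obtain c2 where c2: "cs \<le> c2" "c2 \<le> cs + r" "mfun u lam c2 = mmfun v lam c1"
    using IVT'[of "mfun u lam" cs "mmfun v lam c1" "cs + r"] c1(3) cs(3) \<open>r > 0\<close> by auto
  have c2_in: "c2 \<in> inner_cs lam" using c2 \<open>r > 0\<close> in_inner by simp
  have "c2 \<noteq> cs" using c2(3) cs(3) \<open>1/2 < mmfun v lam c1\<close> by auto
  then have "mmfun v lam c2 < 1/2"
    using order(2)[OF cs(1) c2_in] c2(1) cs by auto
  have "H (mmfun v lam c2) = H (mfun u lam c1)"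
    using sym[OF c1_in] sym[OF c2_in] c2(3) by simp
  then have "mmfun v lam c2 = mfun u lam c1"
    using H_inj_same_side \<open>mmfun v lam c2 < 1/2\<close> \<open>mfun u lam c1 < 1/2\<close> c1_in c2_in unfolding
      inner_cs_def by auto
  then have "c1 = c2"
    using mfun_mmfun_swap_imp_eq[OF \<open>0 < lam\<close> u_neq_v _ _ _ _ c2(3)] c1_in c2_in inner_cs_subset
      mfun_denom_pos_Icc[OF \<open>0 < lam\<close>] mmfun_denom_pos_Icc[OF \<open>0 < lam\<close>] by force
  then show False using c1(2) c2(1) by simp
qed

lemma Phi_nonzero_in_inner_cs:
  assumes lam: "lam \<in> {lam_lo<..<lam_hi}"
  shows "\<exists>c\<in>inner_cs lam. Phi lam c \<noteq> 0"
proof -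
  obtain cs where cs: "cs \<in> inner_cs lam" "mfun u lam cs = mmfun v lam cs"
    using crossing_point[OF lam] by blast
  show ?thesis
  proof (cases "p = 1/2")
    case True
    obtain c where "c \<in> inner_cs lam" "H (mfun u lam c) \<noteq> H (mmfun v lam c)"
      using H_symmetric_crossing_off_half_absurd[OF lam _ cs]
        H_symmetric_crossing_at_half_absurd[OF lam _ cs] by blast
    moreover have "Phi lam c = p * (H (mfun u lam c) - H (mmfun v lam c))" for c
      using True by (simp add: Phi_def right_diff_distrib)
    ultimately show ?thesis using p_pos by auto
  next
    case False
    have "H (mfun u lam cs) > 0" using cs unfolding inner_cs_def by (intro H_pos) auto
    moreover have "Phi lam cs = (2 * p - 1) * H (mfun u lam cs)"
      unfolding Phi_def cs(2) by (simp add: algebra_simps)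
    ultimately show ?thesis using False cs(1) by force
  qed
qed

lemma inj_on_mfun: "0 < lam \<Longrightarrow> inj_on (mfun u lam) {c_lo..c_hi}"
  by (rule inj_onI, rule ccontr) (auto simp: neq_iff dest: mfun_strict_mono_Icc)

lemma inj_on_mmfun: "0 < lam \<Longrightarrow> inj_on (mmfun v lam) {c_lo..c_hi}"
  by (rule inj_onI, rule ccontr) (auto simp: neq_iff dest: mmfun_strict_antimono_Icc)

lemma countable_Phi_zeros:
  assumes lam: "lam \<in> {lam_lo<..<lam_hi}"
  shows "countable {c \<in> {c_lo..c_hi}. mfun u lam c \<in> {sl..sh} \<and> mmfun v lam c \<in> {sl..sh} \<and> Phi lam
    c = 0}"
proof -
  have "0 < lam" using lam lam_lo_pos by simp
  obtain c0 where "c0 \<in> inner_cs lam" "Phi lam c0 \<noteq> 0"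
    using Phi_nonzero_in_inner_cs[OF lam] by blast
  then have "countable {c \<in> inner_cs lam. Phi lam c = 0}"
    using real_holomorphic_on_countable_zeros[OF real_holomorphic_on_Phi_inner_cs open_inner_cs
      connected_inner_cs]
      \<open>0 < lam\<close> by blast
  moreover have "finite (mfun u lam -` {sl, sh} \<inter> {c_lo..c_hi})" "finite (mmfun v lam -` {sl, sh}
    \<inter> {c_lo..c_hi})"
    using inj_on_mfun[OF \<open>0 < lam\<close>] inj_on_mmfun[OF \<open>0 < lam\<close>] by (auto intro: finite_vimage_IntI)
  ultimately have "countable ({c \<in> inner_cs lam. Phi lam c = 0} \<union> {c_lo, c_hi}
      \<union> (mfun u lam -` {sl, sh} \<inter> {c_lo..c_hi}) \<union> (mmfun v lam -` {sl, sh} \<inter> {c_lo..c_hi}))"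
    by (auto intro: countable_finite)
  moreover have "{c \<in> {c_lo..c_hi}. mfun u lam c \<in> {sl..sh} \<and> mmfun v lam c \<in> {sl..sh} \<and> Phi lam c
    = 0}
      \<subseteq> {c \<in> inner_cs lam. Phi lam c = 0} \<union> {c_lo, c_hi}
        \<union> (mfun u lam -` {sl, sh} \<inter> {c_lo..c_hi}) \<union> (mmfun v lam -` {sl, sh} \<inter> {c_lo..c_hi})"
    unfolding inner_cs_def by (auto simp: less_le)
  ultimately show ?thesis
    by (rule countable_subset[rotated])
qed

definition search_box :: "(real \<times> real) set" where
  "search_box = {(lam, c) \<in> {lam_lo..lam_hi} \<times> {c_lo..c_hi}.
     mfun u lam c \<in> {sl..sh} \<and> mmfun v lam c \<in> {sl..sh}}"

lemma compact_search_box: "compact search_box"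
proof -
  have box_subset: "{lam_lo..lam_hi} \<times> {c_lo..c_hi} \<subseteq> {0<..} \<times> {c_lo..c_hi}"
    using lam_lo_pos by auto
  have "continuous_on ({lam_lo..lam_hi} \<times> {c_lo..c_hi})
      (\<lambda>z. (mfun u (fst z) (snd z), mmfun v (fst z) (snd z)))"
    using continuous_on_subset[OF continuous_on_mfun_joint box_subset]
      continuous_on_subset[OF continuous_on_mmfun_joint box_subset] by (rule continuous_on_Pair)
  from continuous_closed_preimage[OF this closed_Times closed_Times]
  have "closed ({lam_lo..lam_hi} \<times> {c_lo..c_hi} \<inter>
      (\<lambda>z. (mfun u (fst z) (snd z), mmfun v (fst z) (snd z))) -` ({sl..sh} \<times> {sl..sh}))"
    by simp
  moreover have "search_box = {lam_lo..lam_hi} \<times> {c_lo..c_hi} \<inter>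
      (\<lambda>z. (mfun u (fst z) (snd z), mmfun v (fst z) (snd z))) -` ({sl..sh} \<times> {sl..sh})"
    by (auto simp: search_box_def)
  moreover have "bounded search_box"
    by (rule bounded_subset[OF compact_imp_bounded[OF compact_Times[OF compact_Icc compact_Icc]]])
      (auto simp: search_box_def)
  ultimately show ?thesis
    by (simp add: compact_eq_bounded_closed)
qed

lemma continuous_on_Phi_search_box:
  "continuous_on search_box (\<lambda>z. (Phi (fst z) 0, Phi (fst z) (snd z)))"
proof -
  have sub: "search_box \<subseteq> Phi_domain" and sub0: "(\<lambda>z. (fst z, 0)) ` search_box \<subseteq> Phi_domain"
    using lam_lo_pos in_Phi_domain_0 by (auto simp: search_box_def Phi_domain_def)
  have "continuous_on search_box (\<lambda>z. (fst z, 0 :: real))"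
    by (intro continuous_intros)
  from continuous_on_compose2[OF continuous_on_Phi this sub0]
  have "continuous_on search_box (\<lambda>z. Phi (fst z) 0)"
    by simp
  moreover have "continuous_on search_box (\<lambda>z. Phi (fst z) (snd z))"
    using continuous_on_subset[OF continuous_on_Phi sub] by (simp add: case_prod_beta)
  ultimately show ?thesis
    by (rule continuous_on_Pair)
qed

definition near_zeros :: "real \<Rightarrow> (real \<times> real) set" where
  "near_zeros d = {(lam, c) \<in> search_box. \<bar>Phi lam 0\<bar> \<le> d \<and> \<bar>Phi lam c\<bar> \<le> d}"

lemma near_zeros_mono: "d1 \<le> d2 \<Longrightarrow> near_zeros d1 \<subseteq> near_zeros d2"
  unfolding near_zeros_def by auto

lemma compact_near_zeros: "compact (near_zeros d)"
proof -
  have "near_zeros d = search_box \<inter>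
      (\<lambda>z. (Phi (fst z) 0, Phi (fst z) (snd z))) -` ({-d..d} \<times> {-d..d})"
    by (auto simp: near_zeros_def abs_le_iff)
  then have "closed (near_zeros d)"
    using continuous_closed_preimage[OF continuous_on_Phi_search_box
        compact_imp_closed[OF compact_search_box] closed_Times] by simp
  moreover have "bounded (near_zeros d)"
    by (rule bounded_subset[OF compact_imp_bounded[OF compact_search_box]]) (auto simp:
      near_zeros_def)
  ultimately show ?thesis
    by (simp add: compact_eq_bounded_closed)
qed

definition near_zero_cs :: "real \<Rightarrow> real set" where
  "near_zero_cs d = snd ` near_zeros d"

lemma near_zero_cs_lmeasurable: "near_zero_cs d \<in> lmeasurable"
  unfolding near_zero_cs_def
  by (intro lmeasurable_compact compact_continuous_image continuous_intros compact_near_zeros)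

lemma countable_near_zero_cs_0: "countable (near_zero_cs 0)"
proof -
  have "near_zero_cs 0 \<subseteq> (\<Union>lam\<in>{lam \<in> {lam_lo<..<lam_hi}. Phi lam 0 = 0}.
      {c \<in> {c_lo..c_hi}. mfun u lam c \<in> {sl..sh} \<and> mmfun v lam c \<in> {sl..sh} \<and> Phi lam c = 0})"
  proof
    fix c assume "c \<in> near_zero_cs 0"
    then obtain lam where "lam \<in> {lam_lo..lam_hi}" "Phi lam 0 = 0" "c \<in> {c_lo..c_hi}" "Phi lam c =
      0"
      "mfun u lam c \<in> {sl..sh}" "mmfun v lam c \<in> {sl..sh}"
      unfolding near_zero_cs_def near_zeros_def search_box_def by auto
    moreover have "lam \<noteq> lam_lo" "lam \<noteq> lam_hi"
      using Phi_0_endpoint_nonzero \<open>Phi lam 0 = 0\<close> by auto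
    ultimately have "lam \<in> {lam \<in> {lam_lo<..<lam_hi}. Phi lam 0 = 0}"
      "c \<in> {c \<in> {c_lo..c_hi}. mfun u lam c \<in> {sl..sh} \<and> mmfun v lam c \<in> {sl..sh} \<and> Phi lam c = 0}"
      by auto
    then show "c \<in> (\<Union>lam\<in>{lam \<in> {lam_lo<..<lam_hi}. Phi lam 0 = 0}.
      {c \<in> {c_lo..c_hi}. mfun u lam c \<in> {sl..sh} \<and> mmfun v lam c \<in> {sl..sh} \<and> Phi lam c = 0})"
      by blast
  qed
  moreover have "countable (\<Union>lam\<in>{lam \<in> {lam_lo<..<lam_hi}. Phi lam 0 = 0}.
      {c \<in> {c_lo..c_hi}. mfun u lam c \<in> {sl..sh} \<and> mmfun v lam c \<in> {sl..sh} \<and> Phi lam c = 0})"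
    using countable_Phi_0_zeros countable_Phi_zeros by (intro countable_UN) auto
  ultimately show ?thesis
    by (rule countable_subset)
qed

lemma Inter_near_zero_cs_subset: "(\<Inter>k. near_zero_cs (inverse (Suc k))) \<subseteq> near_zero_cs 0"
proof
  fix c assume c: "c \<in> (\<Inter>k. near_zero_cs (inverse (Suc k)))"
  define F where "F k = near_zeros (inverse (Suc k)) \<inter> {z. snd z = c}" for k
  have "closed {z :: real \<times> real. snd z = c}"
    by (intro closed_Collect_eq continuous_intros)
  then have "compact (F k)" for k
    unfolding F_def by (intro compact_Int_closed compact_near_zeros)
  moreover have "F k \<noteq> {}" for k
    using c unfolding F_def near_zero_cs_def by auto
  moreover have "F k \<subseteq> F j" if "j \<le> k" for j k
  proof -
    have "inverse (real (Suc k)) \<le> inverse (real (Suc j))"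
      using that by (simp add: le_imp_inverse_le)
    then show ?thesis
      unfolding F_def using near_zeros_mono by blast
  qed
  ultimately have "\<Inter>(range F) \<noteq> {}"
    by (rule compact_nest)
  then obtain z where z: "\<And>k. z \<in> F k"
    by blast
  have bounds: "\<bar>Phi (fst z) 0\<bar> \<le> inverse (Suc k)" "\<bar>Phi (fst z) c\<bar> \<le> inverse (Suc k)" for k
    using z[of k] unfolding F_def near_zeros_def by (cases z; simp)+
  have "\<bar>Phi (fst z) 0\<bar> \<le> 0" "\<bar>Phi (fst z) c\<bar> \<le> 0"
    by (rule LIMSEQ_le_const[OF LIMSEQ_inverse_real_of_nat]; use bounds in blast)+
  then have "z \<in> near_zeros 0"
    using z[of 0] unfolding F_def near_zeros_def by auto
  then show "c \<in> near_zero_cs 0"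
    using z[of 0] unfolding F_def near_zero_cs_def by force
qed

lemma Phi_approx:
  assumes g: "g \<in> Finf sl sh" and e: "\<And>s. s \<in> {sl<..<sh} \<Longrightarrow> \<bar>f s - g s\<bar> < e"
    and m: "mfun u lam c \<in> {sl..sh}" "mmfun v lam c \<in> {sl..sh}"
    and G: "Gf sl sh p u v g lam c = 0"
  shows "\<bar>Phi lam c\<bar> \<le> e * (1 / sl + 2) * (sh - sl)"
proof -
  define B where "B = e * (1 / sl + 2) * (sh - sl)"
  define x1 where "x1 = integral {sl..mfun u lam c} (\<lambda>s. g s * wt s) - H (mfun u lam c)"
  define x2 where "x2 = integral {sl..mmfun v lam c} (\<lambda>s. g s * wt s) - H (mmfun v lam c)"
  have x_bounds: "\<bar>x1\<bar> \<le> B" "\<bar>x2\<bar> \<le> B"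
    unfolding x1_def x2_def H_def B_def
    using weighted_primitive_approx[OF f_Finf g sl_pos sl_less_sh _ e] m by auto
  have "Phi lam c = (1 - p) * x2 - p * x1"
    using G Gf_eq_diff[OF g m(2)] unfolding Phi_def x1_def x2_def by (simp add: algebra_simps)
  then have "\<bar>Phi lam c\<bar> \<le> (1 - p) * \<bar>x2\<bar> + p * \<bar>x1\<bar>"
    using p_pos p_less_1 abs_triangle_ineq4[of "(1 - p) * x2" "p * x1"] by (simp add: abs_mult)
  also have "\<dots> \<le> (1 - p) * B + p * B"
    using x_bounds p_pos p_less_1
    by (intro add_mono mult_left_mono) auto
  also have "\<dots> = B"
    by (simp add: algebra_simps)
  finally show ?thesis
    unfolding B_def .
qed

lemma Sset_subset_near_zero_cs:
  assumes g: "g \<in> Finf sl sh" and e: "\<And>s. s \<in> {sl<..<sh} \<Longrightarrow> \<bar>f s - g s\<bar> < e"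
  shows "Sset sl sh p u v eps0 g \<subseteq> near_zero_cs (e * (1 / sl + 2) * (sh - sl))"
proof
  fix c assume "c \<in> Sset sl sh p u v eps0 g"
  then obtain lam where c: "c \<in> Ceps sl sh u v eps0"
    and lam: "lam \<in> Eset sl sh u v 0" "lam \<in> Eset sl sh u v c"
    and G: "Gf sl sh p u v g lam 0 = 0" "Gf sl sh p u v g lam c = 0"
    unfolding Sset_def by blast
  have "c \<in> {c_lo..c_hi}"
    using c unfolding Ceps_def Cset_def c_lo_def c_hi_def by auto
  moreover have "lam \<in> {lam_lo..lam_hi}"
    using lam(1) Eset_0_eq by auto
  moreover have m: "mfun u lam c \<in> {sl..sh}" "mmfun v lam c \<in> {sl..sh}"
    "mfun u lam 0 \<in> {sl..sh}" "mmfun v lam 0 \<in> {sl..sh}"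
    using lam unfolding Eset_def by auto
  ultimately have "(lam, c) \<in> near_zeros (e * (1 / sl + 2) * (sh - sl))"
    using Phi_approx[OF g e m(1,2) G(2)] Phi_approx[OF g e m(3,4) G(1)]
    unfolding near_zeros_def search_box_def by auto
  then show "c \<in> near_zero_cs (e * (1 / sl + 2) * (sh - sl))"
    unfolding near_zero_cs_def by force
qed

lemma uniform_lower_bound_near_zero_cs_eq_0:
  fixes a :: ennreal
  assumes "\<And>d. 0 < d \<Longrightarrow> a \<le> emeasure lebesgue (near_zero_cs d)"
  shows "a = 0"
proof -
  have "a \<le> (INF k. emeasure lebesgue (near_zero_cs (inverse (Suc k))))"
    by (rule INF_greatest) (simp add: assms)
  also have "\<dots> = emeasure lebesgue (\<Inter>k. near_zero_cs (inverse (Suc k)))"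
  proof (rule INF_emeasure_decseq)
    show "decseq (\<lambda>k. near_zero_cs (inverse (Suc k)))"
      unfolding decseq_def near_zero_cs_def
      by (intro allI impI image_mono near_zeros_mono) (simp add: le_imp_inverse_le)
  qed (use fmeasurableD[OF near_zero_cs_lmeasurable] fmeasurableD2[OF near_zero_cs_lmeasurable] in
      \<open>auto simp: infinity_ennreal_def\<close>)
  also have "\<dots> \<le> emeasure lebesgue (near_zero_cs 0)"
    using Inter_near_zero_cs_subset near_zero_cs_lmeasurable by (intro emeasure_mono) auto
  also have "\<dots> = 0"
    using countable_near_zero_cs_0
    by (intro null_setsD1 null_sets_completionI countable_imp_null_set_lborel)
  finally show ?thesis by simp
qed

theorem not_in_Linf_closure_Fn:
  assumes "1 \<le> n"
  shows "f \<notin> Linf_closure sl sh (Fn sl sh p u v eps0 n)"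
proof
  assume f: "f \<in> Linf_closure sl sh (Fn sl sh p u v eps0 n)"
  define B where "B = (1 / sl + 2) * (sh - sl)"
  have "B > 0" using sl_pos sl_less_sh by (simp add: B_def add_pos_pos)
  have "ennreal (1 / real n) \<le> emeasure lebesgue (near_zero_cs d)" if "0 < d" for d
  proof -
    have "0 < d / B" using \<open>0 < d\<close> \<open>B > 0\<close> by simp
    then obtain g where g: "g \<in> Fn sl sh p u v eps0 n" and close: "\<forall>s\<in>{sl<..<sh}. \<bar>f s - g s\<bar> < d
      / B"
      using f unfolding Linf_closure_def by blast
    have "g \<in> Finf sl sh" using g by (simp add: Fn_def)
    then have "Sset sl sh p u v eps0 g \<subseteq> near_zero_cs (d / B * (1 / sl + 2) * (sh - sl))"
      by (rule Sset_subset_near_zero_cs) (use close in auto)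
    moreover have "d / B * (1 / sl + 2) * (sh - sl) = d"
      using \<open>B > 0\<close> unfolding B_def by (auto simp: mult.assoc)
    ultimately have "Sset sl sh p u v eps0 g \<subseteq> near_zero_cs d"
      by simp
    then have "emeasure lebesgue (Sset sl sh p u v eps0 g) \<le> emeasure lebesgue (near_zero_cs d)"
      using fmeasurableD[OF near_zero_cs_lmeasurable] by (rule emeasure_mono)
    moreover have "ennreal (1 / real n) \<le> emeasure lebesgue (Sset sl sh p u v eps0 g)"
      using g unfolding Fn_def by blast
    ultimately show ?thesis
      by (rule order_trans[rotated])
  qed
  then have "ennreal (1 / real n) = 0"
    by (rule uniform_lower_bound_near_zero_cs_eq_0)
  then show False using assms by simp
qed

end

theorem proposition9:
  fixes sl sh p u v eps0 :: real and n :: nat and f :: "real \<Rightarrow> real"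
  assumes "0 < sl" "sl < sh" "sh < 1"
    and "0 < p" "p < 1"
    and "u > 0" "v > 0" "u \<noteq> v"
    and "Eset sl sh u v 0 \<noteq> {}"
    and "eps0 > 0" and "n \<ge> 1"
    and "f \<in> Finf sl sh"
    and "real_analytic_on f {sl<..<sh}"
  shows "f \<notin> Linf_closure sl sh (Fn sl sh p u v eps0 n)"
proof -
  interpret signal_game sl sh f p u v
    using assms by unfold_locales auto
  show ?thesis
    using \<open>n \<ge> 1\<close> by (rule not_in_Linf_closure_Fn)
qed

end
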